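(* Let $Q$ be a non-degenerate non-definite hermitian form on $\mathbb{C}^N$, and let $(w_1,\dots,w_N)$ be a basis of $\mathbb{C}^N$ with $Q(w_i)=0$ for $1\le i\le N$ and $Q(w_i,w_j)\ne0$ for $1\le i\ne j\le N$. Let $G_i$ be the stabilizer of $w_i$ in $SU(Q)$. Then the smallest closed subgroup of $SU(Q)$ containing $G_1,\dots,G_N$ is $SU(Q)$.
   Context: $Q(u)$ denotes $Q(u,u)$; $SU(Q)$ is the group of determinant-one linear automorphisms of $\mathbb{C}^N$ preserving $Q$; "closed" refers to the usual topology. *)

theory Defs
  imports "HOL-Analysis.Analysis"
begin

text \<open>Hermitian forms on C^N, with N given by a finite index type 'n.
  Convention: linear in the first argument, conjugate-linear in the second.\<close>

definition hermitian_form :: "(complex^'n \<Rightarrow> complex^'n \<Rightarrow> complex) \<Rightarrow> bool" where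
  "hermitian_form Q \<longleftrightarrow>
     (\<forall>u u' v. Q (u + u') v = Q u v + Q u' v) \<and>
     (\<forall>c u v. Q (c *s u) v = c * Q u v) \<and>
     (\<forall>u v. Q v u = cnj (Q u v))"

definition nondegenerate_form :: "(complex^'n \<Rightarrow> complex^'n \<Rightarrow> complex) \<Rightarrow> bool" where
  "nondegenerate_form Q \<longleftrightarrow> (\<forall>u. (\<forall>v. Q u v = 0) \<longrightarrow> u = 0)"

text \<open>Non-definite: Q(u)=Q(u,u) (real for a hermitian form) takes both signs.\<close>
definition nondefinite_form :: "(complex^'n \<Rightarrow> complex^'n \<Rightarrow> complex) \<Rightarrow> bool" where
  "nondefinite_form Q \<longleftrightarrow> (\<exists>u v. Re (Q u u) > 0 \<and> Re (Q v v) < 0)"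

definition SU_form :: "(complex^'n \<Rightarrow> complex^'n \<Rightarrow> complex) \<Rightarrow> (complex^'n^'n) set" where
  "SU_form Q = {A. det A = 1 \<and> (\<forall>u v. Q (A *v u) (A *v v) = Q u v)}"

definition stabilizer_SU ::
  "(complex^'n \<Rightarrow> complex^'n \<Rightarrow> complex) \<Rightarrow> complex^'n \<Rightarrow> (complex^'n^'n) set" where
  "stabilizer_SU Q w = {A \<in> SU_form Q. A *v w = w}"

definition matrix_subgroup :: "(complex^'n^'n) set \<Rightarrow> bool" where
  "matrix_subgroup H \<longleftrightarrow> mat 1 \<in> H \<and> (\<forall>A\<in>H. \<forall>B\<in>H. A ** B \<in> H)
      \<and> (\<forall>A\<in>H. invertible A \<and> matrix_inv A \<in> H)"

definition closed_subgroup_generated ::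
  "(complex^'n \<Rightarrow> complex^'n \<Rightarrow> complex) \<Rightarrow> (complex^'n^'n) set \<Rightarrow> (complex^'n^'n) set" where
  "closed_subgroup_generated Q S =
     \<Inter>{H. H \<subseteq> SU_form Q \<and> matrix_subgroup H \<and> closed H \<and> S \<subseteq> H}"

end

theory Submission
  imports Defs "HOL-Computational_Algebra.Fundamental_Theorem_Algebra"
begin

(* Already the abstract subgroup H generated by the stabilizers G_e, G_f of two vectors e, f with
   Q(e) = Q(f) = 0 and Q(e,f) = 1 is all of SU(Q). Eichler transvections in G_e and G_f move g e
   back onto the line of e for every g in SU(Q); since G_e <= H, it then suffices to find, for every
   scalar alpha arising this way, an element of H scaling e by alpha. A product of three
   transvections from G_f, G_e, G_f does this when alpha is real, or when some anisotropic vector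
   is orthogonal to e and f. In the remaining case e and f span C^N, and a determinant computation
   shows alpha / cnj alpha = 1, so alpha is real after all. *)

lemma det_pencil_poly:
  fixes A B :: "complex^'n^'n"
  shows "\<exists>P. \<forall>t. det (\<chi> i j. A$i$j + t * B$i$j) = poly P t"
proof -
  define P where "P = (\<Sum>p\<in>{p. p permutes (UNIV::'n set)}.
      smult (of_int (sign p)) (\<Prod>i\<in>UNIV. [:A$i$p i, B$i$p i:]))"
  have "\<forall>t. det (\<chi> i j. A$i$j + t * B$i$j) = poly P t"
    by (simp add: P_def det_def poly_sum poly_prod)
  then show ?thesis by blast
qed

text \<open>A polynomial without complex zeros is constant.\<close>

lemma det_eq_if_invertible_pencil:
  fixes A B :: "complex^'n^'n"
  assumes "\<And>t. invertible (\<chi> i j. A$i$j + t * B$i$j)"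
  shows "det (\<chi> i j. A$i$j + B$i$j) = det A"
proof -
  obtain P where P: "\<And>t. det (\<chi> i j. A$i$j + t * B$i$j) = poly P t"
    using det_pencil_poly by blast
  have "poly P t \<noteq> 0" for t
    using assms[of t] by (simp add: invertible_det_nz flip: P)
  then have "constant (poly P)"
    using fundamental_theorem_of_algebra by blast
  then have "poly P 1 = poly P 0"
    unfolding constant_def by blast
  then show ?thesis
    using P[of 1] P[of 0] by simp
qed

lemma det_unipotent:
  fixes N :: "complex^'n^'n"
  assumes "N ** N ** N = 0"
  shows "det (mat 1 + N) = 1"
proof -
  have "invertible (\<chi> i j. mat 1$i$j + t * N$i$j)" for t
  proof -
    define M where "M = (\<chi> i j. t * N$i$j)"
    have "M ** M ** M = (\<chi> i j. t * (t * (t * (N ** N ** N)$i$j)))"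
      unfolding M_def
      by (simp add: matrix_matrix_mult_def vec_eq_iff sum_distrib_left sum_distrib_right mult_ac)
    then have "M ** M ** M = 0"
      using assms by (simp add: vec_eq_iff)
    then have "M *v (M *v (M *v x)) = 0" for x
      by (simp add: matrix_vector_mul_assoc matrix_mul_assoc)
    then have "(mat 1 + M) ** (mat 1 - M + M ** M) = mat 1"
      unfolding matrix_eq by (simp add: matrix_vector_mul_assoc[symmetric] algebra_simps)
    then have "det (mat 1 + M) * det (mat 1 - M + M ** M) = 1"
      by (simp flip: det_mul)
    then have "det (mat 1 + M) \<noteq> 0"
      by auto
    moreover have "(\<chi> i j. mat 1$i$j + t * N$i$j) = mat 1 + M"
      by (simp add: M_def vec_eq_iff)
    ultimately show ?thesis
      by (simp add: invertible_det_nz)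
  qed
  then have "det (\<chi> i j. mat 1$i$j + N$i$j) = 1"
    by (simp add: det_eq_if_invertible_pencil)
  moreover have "(\<chi> i j. mat 1$i$j + N$i$j) = mat 1 + N"
    by (simp add: vec_eq_iff)
  ultimately show ?thesis by simp
qed

lemma det_eq_prod_eigenvalues:
  fixes M B :: "'a::field^'n^'n"
  assumes B: "invertible B" and eigen: "\<And>j. M *v column j B = l j *s column j B"
  shows "det M = prod l UNIV"
proof -
  let ?D = "\<chi> i j. if i = j then l j else 0"
  have "(M ** B) $ i $ j = (B ** ?D) $ i $ j" for i j
  proof -
    have "(M ** B) $ i $ j = (M *v column j B) $ i"
      by (simp add: matrix_matrix_mult_def matrix_vector_mult_def column_def)
    also have "\<dots> = (\<Sum>k\<in>UNIV. B$i$k * (if k = j then l j else 0))"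
      using eigen[of j] by (simp add: column_def if_distrib[of "(*) _"] mult.commute cong: if_cong)
    finally show ?thesis
      by (simp add: matrix_matrix_mult_def)
  qed
  then have "M ** B = B ** ?D"
    by (simp add: vec_eq_iff)
  then have "det M * det B = det B * det ?D"
    by (simp flip: det_mul)
  also have "det ?D = prod l UNIV"
    by (subst det_diagonal) auto
  finally have "det M * det B = det B * prod l UNIV" .
  moreover have "det B \<noteq> 0"
    using B invertible_det_nz by blast
  ultimately show ?thesis by simp
qed

lemma matrix_vector_mult_columns_axis:
  "(\<chi> i j. w j $ i) *v axis j 1 = (w j :: 'a::comm_ring_1^'n)"
  by (simp add: vec_eq_iff matrix_vector_mult_def axis_def if_distrib[of "(*) _"] cong: if_cong)

lemma invertible_columns_nonzero:
  fixes w :: "'n \<Rightarrow> 'a::field^'n"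
  assumes "invertible (\<chi> i j. w j $ i)"
  shows "w j \<noteq> 0"
proof
  assume "w j = 0"
  then have "(\<chi> i j. w j $ i) *v axis j 1 = (\<chi> i j. w j $ i) *v 0"
    by (simp add: matrix_vector_mult_columns_axis)
  then have "axis j (1::'a) = 0"
    using inj_matrix_vector_mult[OF assms] by (meson injD)
  then show False
    by (simp add: axis_eq_0_iff)
qed

lemma matrix_inv_right: "invertible A \<Longrightarrow> A ** matrix_inv A = mat 1"
  and matrix_inv_left: "invertible A \<Longrightarrow> matrix_inv A ** A = mat 1"
  using someI_ex[of "\<lambda>A'. A ** A' = mat 1 \<and> A' ** A = mat 1"]
  unfolding invertible_def matrix_inv_def by auto

lemma matrix_subgroup_cancel_left:
  assumes "matrix_subgroup H" "A \<in> H" "A ** B \<in> H"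
  shows "B \<in> H"
proof -
  have "B = matrix_inv A ** (A ** B)"
    using assms by (simp add: matrix_mul_assoc matrix_inv_left matrix_subgroup_def)
  moreover have "matrix_inv A ** (A ** B) \<in> H"
    using assms by (simp add: matrix_subgroup_def)
  ultimately show ?thesis
    by simp
qed

lemma SU_formD: "A \<in> SU_form Q \<Longrightarrow> Q (A *v u) (A *v v) = Q u v"
  by (simp add: SU_form_def)

lemma mat_1_SU_form: "mat 1 \<in> SU_form Q"
  unfolding SU_form_def by simp

lemma SU_form_mult: "A \<in> SU_form Q \<Longrightarrow> B \<in> SU_form Q \<Longrightarrow> A ** B \<in> SU_form Q"
  unfolding SU_form_def by (simp add: det_mul matrix_vector_mul_assoc[symmetric])

lemma invertible_SU_form: "A \<in> SU_form Q \<Longrightarrow> invertible A"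
  unfolding SU_form_def by (simp add: invertible_det_nz)

lemma matrix_inv_SU_form:
  assumes "A \<in> SU_form Q"
  shows "matrix_inv A \<in> SU_form Q"
proof -
  have inv: "invertible A"
    using assms by (rule invertible_SU_form)
  have "det A * det (matrix_inv A) = 1"
    using matrix_inv_right[OF inv] by (simp flip: det_mul)
  moreover have "Q (matrix_inv A *v u) (matrix_inv A *v v) = Q u v" for u v
    using SU_formD[OF assms, of "matrix_inv A *v u" "matrix_inv A *v v"]
    by (simp add: matrix_vector_mul_assoc matrix_inv_right[OF inv])
  ultimately show ?thesis
    using assms by (simp add: SU_form_def)
qed

lemma matrix_subgroup_SU_form: "matrix_subgroup (SU_form Q)"
  unfolding matrix_subgroup_def
  using mat_1_SU_form SU_form_mult matrix_inv_SU_form invertible_SU_form by blast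

lemma SU_form_eigenvalue_nonzero:
  assumes "A \<in> SU_form Q" "A *v x = c *s x" "x \<noteq> 0"
  shows "c \<noteq> 0"
proof
  assume "c = 0"
  then have "A *v x = A *v 0"
    using assms(2) by simp
  then have "x = 0"
    by (rule injD[OF inj_matrix_vector_mult[OF invertible_SU_form[OF assms(1)]]])
  then show False
    using assms(3) by simp
qed

lemma stabilizer_SU_subset: "stabilizer_SU Q w \<subseteq> SU_form Q"
  by (auto simp: stabilizer_SU_def)

lemma stabilizer_SU_scale:
  assumes "c \<noteq> 0"
  shows "stabilizer_SU Q (c *s w) = stabilizer_SU Q w"
  using assms by (simp add: stabilizer_SU_def vec.scale vector_mul_lcancel)

lemma mem_subgroup_if_same_image:
  assumes H: "H \<subseteq> SU_form Q" "matrix_subgroup H" "stabilizer_SU Q p \<subseteq> H"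
    and t: "t \<in> H" and k: "k \<in> SU_form Q" and same: "k *v p = t *v p"
  shows "k \<in> H"
proof -
  have tSU: "t \<in> SU_form Q"
    using t H(1) by blast
  then have inv: "invertible t"
    by (rule invertible_SU_form)
  have "(matrix_inv t ** k) *v p = matrix_inv t *v (t *v p)"
    by (simp add: same flip: matrix_vector_mul_assoc)
  also have "\<dots> = p"
    by (simp add: matrix_vector_mul_assoc matrix_inv_left[OF inv])
  finally have "matrix_inv t ** k \<in> H"
    using SU_form_mult[OF matrix_inv_SU_form[OF tSU] k] H(3) by (auto simp: stabilizer_SU_def)
  then have "t ** (matrix_inv t ** k) \<in> H"
    using t H(2) by (simp add: matrix_subgroup_def)
  then show ?thesis
    by (simp add: matrix_mul_assoc matrix_inv_right[OF inv])
qed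

locale herm_form =
  fixes Q :: "complex^'n \<Rightarrow> complex^'n \<Rightarrow> complex"
  assumes hermitian: "hermitian_form Q"
begin

lemma Q_add_left [simp]: "Q (x + y) z = Q x z + Q y z"
  using hermitian unfolding hermitian_form_def by blast

lemma Q_scale_left [simp]: "Q (c *s x) z = c * Q x z"
  using hermitian unfolding hermitian_form_def by blast

lemma Q_cnj_swap: "Q y x = cnj (Q x y)"
  using hermitian unfolding hermitian_form_def by blast

lemma Q_eq_0_swap: "Q x y = 0 \<Longrightarrow> Q y x = 0"
  by (simp add: Q_cnj_swap[of y x])

lemma Q_add_right [simp]: "Q x (y + z) = Q x y + Q x z"
  by (metis Q_add_left Q_cnj_swap complex_cnj_add)

lemma Q_scale_right [simp]: "Q x (c *s y) = cnj c * Q x y"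
  by (metis Q_scale_left Q_cnj_swap complex_cnj_mult)

lemma Q_zero_left [simp]: "Q 0 x = 0"
  using Q_scale_left[of 0 0 x] by simp

lemma Q_zero_right [simp]: "Q x 0 = 0"
  using Q_scale_right[of x 0 0] by simp

lemma Q_neg_left [simp]: "Q (- x) y = - Q x y"
  using Q_scale_left[of "-1" x y] by (simp add: vector_sneg_minus1[symmetric])

lemma Q_neg_right [simp]: "Q x (- y) = - Q x y"
  using Q_scale_right[of x "-1" y] by (simp add: vector_sneg_minus1[symmetric])

lemma Q_diff_left [simp]: "Q (x - y) z = Q x z - Q y z"
  by (metis Q_add_left Q_neg_left diff_conv_add_uminus)

lemma Q_diff_right [simp]: "Q x (y - z) = Q x y - Q x z"
  by (metis Q_add_right Q_neg_right diff_conv_add_uminus)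

lemma Q_sum_left: "Q (\<Sum>i\<in>S. f i) z = (\<Sum>i\<in>S. Q (f i) z)"
  by (induct S rule: infinite_finite_induct) auto

lemma Q_sum_right: "Q z (\<Sum>i\<in>S. f i) = (\<Sum>i\<in>S. Q z (f i))"
  by (induct S rule: infinite_finite_induct) auto

lemma cnj_Q_self: "cnj (Q x x) = Q x x"
  by (metis Q_cnj_swap)

lemma Q_coordinates:
  "Q x y = (\<Sum>i\<in>UNIV. \<Sum>j\<in>UNIV. x$i * cnj (y$j) * Q (axis i 1) (axis j 1))"
proof -
  have "Q x y = Q (\<Sum>i\<in>UNIV. x$i *s axis i 1) (\<Sum>j\<in>UNIV. y$j *s axis j 1)"
    by (simp add: basis_expansion)
  also have "\<dots> = (\<Sum>i\<in>UNIV. \<Sum>j\<in>UNIV. x$i * cnj (y$j) * Q (axis i 1) (axis j 1))"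
    by (simp add: Q_sum_left Q_sum_right sum_distrib_left mult_ac) (subst sum.swap, simp)
  finally show ?thesis .
qed

lemma closed_SU_form: "closed (SU_form Q)"
proof -
  have "SU_form Q = {A. det A = 1} \<inter> (\<Inter>u. \<Inter>v. {A. Q (A *v u) (A *v v) = Q u v})"
    unfolding SU_form_def by auto
  moreover have "continuous_on UNIV (\<lambda>A::complex^'n^'n. det A)"
    unfolding det_def by (intro continuous_intros)
  moreover have "continuous_on UNIV (\<lambda>A::complex^'n^'n. Q (A *v u) (A *v v))" for u v
    by (subst Q_coordinates, unfold matrix_vector_mult_def vec_lambda_beta, intro continuous_intros)
  ultimately show ?thesis
    by (simp add: closed_Int closed_INT closed_Collect_eq)
qed

lemma closed_subgroup_generated_eq_SU_form:
  assumes "S \<subseteq> SU_form Q"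
    and "\<And>H. H \<subseteq> SU_form Q \<Longrightarrow> matrix_subgroup H \<Longrightarrow> S \<subseteq> H \<Longrightarrow> SU_form Q \<subseteq> H"
  shows "closed_subgroup_generated Q S = SU_form Q"
proof -
  have "SU_form Q \<in> {H. H \<subseteq> SU_form Q \<and> matrix_subgroup H \<and> closed H \<and> S \<subseteq> H}"
    using assms(1) matrix_subgroup_SU_form closed_SU_form by blast
  then show ?thesis
    unfolding closed_subgroup_generated_def using assms(2) by (intro equalityI Inf_lower Inf_greatest) auto
qed

lemma nondefinite_two_indices:
  assumes "nondefinite_form Q" "Q w w = 0" "w \<noteq> 0"
  obtains i j :: 'n where "i \<noteq> j"
proof (rule ccontr)
  assume "\<not> thesis"
  then have one: "j = i" for i j :: 'n
    using that by blast
  obtain i where i: "w $ i \<noteq> 0"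
    using assms(3) by (auto simp: vec_eq_iff)
  have "Q x x = 0" for x
  proof -
    have "x = (x $ i / w $ i) *s w"
      unfolding vec_eq_iff
    proof
      fix j
      have "j = i"
        by (rule one)
      then show "x $ j = ((x $ i / w $ i) *s w) $ j"
        using i by simp
    qed
    moreover have "Q ((x $ i / w $ i) *s w) ((x $ i / w $ i) *s w) = 0"
      using assms(2) by simp
    ultimately show ?thesis
      by simp
  qed
  then show False
    using assms(1) by (auto simp: nondefinite_form_def)
qed

definition transvection_nil :: "complex^'n \<Rightarrow> complex^'n \<Rightarrow> complex \<Rightarrow> complex^'n \<Rightarrow> complex^'n"
  where "transvection_nil p u z x = Q x p *s u - Q x u *s p + (z * Q x p) *s p"

definition transvection :: "complex^'n \<Rightarrow> complex^'n \<Rightarrow> complex \<Rightarrow> complex^'n^'n"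
  where "transvection p u z = mat 1 + matrix (transvection_nil p u z)"

lemma linear_transvection_nil: "Vector_Spaces.linear (*s) (*s) (transvection_nil p u z)"
  by unfold_locales (simp_all add: transvection_nil_def algebra_simps vector_add_ldistrib
      vector_sadd_rdistrib vector_smult_assoc vector_ssub_ldistrib vector_sub_rdistrib)

lemma matrix_transvection_nil_apply:
  "matrix (transvection_nil p u z) *v x = transvection_nil p u z x"
  by (rule matrix_works[OF linear_transvection_nil])

lemma transvection_apply [simp]:
  "transvection p u z *v x = x + Q x p *s u - Q x u *s p + (z * Q x p) *s p"
  by (simp add: transvection_def matrix_transvection_nil_apply
      transvection_nil_def algebra_simps)

lemma transvection_fixes: "Q p p = 0 \<Longrightarrow> Q u p = 0 \<Longrightarrow> transvection p u z *v p = p"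
  using Q_eq_0_swap[of u p] by simp

lemma transvection_preserves_Q:
  assumes "Q p p = 0" "Q u p = 0" "z + cnj z + Q u u = 0"
  shows "Q (transvection p u z *v x) (transvection p u z *v y) = Q x y"
proof -
  have "Q p u = 0"
    using assms(2) by (rule Q_eq_0_swap)
  moreover have "Q u y = cnj (Q y u)" "Q p y = cnj (Q y p)"
    by (rule Q_cnj_swap)+
  ultimately have "Q (transvection p u z *v x) (transvection p u z *v y)
      = Q x y + Q x p * cnj (Q y p) * (z + cnj z + Q u u)"
    using assms(1,2) by (simp add: algebra_simps)
  then show ?thesis
    using assms(3) by simp
qed

lemma det_transvection:
  assumes "Q p p = 0" "Q u p = 0"
  shows "det (transvection p u z) = 1"
proof -
  let ?N = "matrix (transvection_nil p u z)"
  have "Q p u = 0"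
    using assms(2) by (rule Q_eq_0_swap)
  then have "transvection_nil p u z (transvection_nil p u z (transvection_nil p u z x)) = 0" for x
    using assms by (simp add: transvection_nil_def vector_smult_assoc)
  then have "?N ** ?N ** ?N = 0"
    unfolding matrix_eq by (simp add: matrix_transvection_nil_apply matrix_vector_mul_assoc[symmetric])
  then show ?thesis
    unfolding transvection_def by (rule det_unipotent)
qed

lemma transvection_stabilizer:
  assumes "Q p p = 0" "Q u p = 0" "z + cnj z + Q u u = 0"
  shows "transvection p u z \<in> stabilizer_SU Q p"
  unfolding stabilizer_SU_def SU_form_def
  using det_transvection[OF assms(1,2)] transvection_preserves_Q[OF assms]
    transvection_fixes[OF assms(1,2)] by simp

lemma transvection_stabilizer_imag:
  assumes "Q p p = 0" "z + cnj z = 0"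
  shows "transvection p 0 z \<in> stabilizer_SU Q p"
  using assms by (intro transvection_stabilizer) simp_all

end

locale hyperbolic_pair = herm_form Q for Q :: "complex^'n \<Rightarrow> complex^'n \<Rightarrow> complex" +
  fixes e f :: "complex^'n"
  assumes nondegenerate: "nondegenerate_form Q"
    and Q_e_e [simp]: "Q e e = 0" and Q_f_f [simp]: "Q f f = 0" and Q_e_f [simp]: "Q e f = 1"
begin

lemma Q_f_e [simp]: "Q f e = 1"
  using Q_cnj_swap[of e f] by simp

lemma e_nonzero: "e \<noteq> 0"
proof
  assume "e = 0"
  then show False
    using Q_e_f by simp
qed

definition perp :: "complex^'n \<Rightarrow> complex^'n"
  where "perp x = x - Q x f *s e - Q x e *s f"

lemma Q_perp_e [simp]: "Q (perp x) e = 0" and Q_perp_f [simp]: "Q (perp x) f = 0"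
  by (simp_all add: perp_def)

lemma exists_stabilizer_e_pairing_f_nonzero:
  assumes "v \<noteq> 0"
  shows "\<exists>h\<in>stabilizer_SU Q e. Q (h *v v) f \<noteq> 0"
proof -
  consider "Q v f \<noteq> 0" | "Q v f = 0" "Q v e \<noteq> 0" | "Q v f = 0" "Q v e = 0"
    by blast
  then show ?thesis
  proof cases
    case 1
    show ?thesis
    proof
      show "mat 1 \<in> stabilizer_SU Q e"
        by (simp add: stabilizer_SU_def mat_1_SU_form)
    qed (use 1 in simp)
  next
    case 2
    show ?thesis
    proof
      show "transvection e 0 \<i> \<in> stabilizer_SU Q e"
        by (rule transvection_stabilizer_imag) simp_all
    qed (use 2 in simp)
  next
    case 3
    obtain y where y: "Q v y \<noteq> 0"
      using nondegenerate assms unfolding nondegenerate_form_def by blast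
    define u where "u = perp y"
    define z where "z = - Q u u / 2"
    have "z + cnj z + Q u u = 0"
      using cnj_Q_self[of u] by (simp add: z_def complex_eq_iff)
    moreover have "Q u e = 0"
      by (simp add: u_def)
    ultimately have "transvection e u z \<in> stabilizer_SU Q e"
      by (intro transvection_stabilizer Q_e_e)
    moreover have "Q v u = Q v y"
      using 3 by (simp add: u_def perp_def)
    then have "Q (transvection e u z *v v) f \<noteq> 0"
      using 3 y by simp
    ultimately show ?thesis by blast
  qed
qed

lemma exists_stabilizer_f_to_line_e:
  assumes isotropic: "Q v v = 0" and "Q v f \<noteq> 0"
  shows "\<exists>h\<in>stabilizer_SU Q f. h *v v = Q v f *s e"
proof -
  define \<alpha> where "\<alpha> = Q v f"
  define y where "y = Q v e"
  define w where "w = perp v"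
  define u where "u = (- 1 / \<alpha>) *s w"
  define z where "z = - (y + Q w w / cnj \<alpha>) / \<alpha>"
  have \<alpha>: "\<alpha> \<noteq> 0"
    using assms(2) by (simp add: \<alpha>_def)
  have v: "v = \<alpha> *s e + y *s f + w"
    by (simp add: w_def perp_def \<alpha>_def y_def)
  have w_perp: "Q w e = 0" "Q e w = 0" "Q w f = 0" "Q f w = 0"
    using Q_eq_0_swap[OF Q_perp_e] Q_eq_0_swap[OF Q_perp_f] by (simp_all add: w_def)
  have "Q v v = \<alpha> * cnj y + y * cnj \<alpha> + Q w w"
    by (subst (1 2) v) (simp add: w_perp algebra_simps)
  then have Q_w_w: "Q w w = - (\<alpha> * cnj y + y * cnj \<alpha>)"
    using isotropic by (simp add: add_eq_0_iff2)
  have "z + cnj z + Q u u = 0"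
    using \<alpha> by (simp add: z_def u_def Q_w_w field_simps)
  then have stab: "transvection f u z \<in> stabilizer_SU Q f"
    by (intro transvection_stabilizer) (simp_all add: u_def w_perp)
  have "Q v w = Q w w"
    by (subst v) (simp add: w_perp)
  then have "transvection f u z *v v = \<alpha> *s e + (y + Q w w / cnj \<alpha> + z * \<alpha>) *s f"
    using \<alpha> by (simp add: \<alpha>_def[symmetric] u_def algebra_simps vector_sadd_rdistrib) (subst v, simp)
  also have "y + Q w w / cnj \<alpha> + z * \<alpha> = 0"
    using \<alpha> by (simp add: z_def field_simps)
  finally have "transvection f u z *v v = \<alpha> *s e"
    by simp
  with stab show ?thesis
    unfolding \<alpha>_def by blast
qed

lemma exists_stabilizers_move_e_into_line:
  assumes g: "g \<in> SU_form Q"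
  shows "\<exists>h0\<in>stabilizer_SU Q e. \<exists>h1\<in>stabilizer_SU Q f. \<exists>\<alpha>. (h1 ** h0 ** g) *v e = \<alpha> *s e"
proof -
  have "g *v e \<noteq> 0"
    using SU_form_eigenvalue_nonzero[OF g, of e 0] e_nonzero by auto
  then obtain h0 where h0: "h0 \<in> stabilizer_SU Q e" and pairing: "Q (h0 *v (g *v e)) f \<noteq> 0"
    using exists_stabilizer_e_pairing_f_nonzero by blast
  have "h0 \<in> SU_form Q"
    using h0 stabilizer_SU_subset by blast
  then have "Q (h0 *v (g *v e)) (h0 *v (g *v e)) = 0"
    using g by (simp only: SU_formD Q_e_e)
  then obtain h1 where h1: "h1 \<in> stabilizer_SU Q f"
      and "h1 *v (h0 *v (g *v e)) = Q (h0 *v (g *v e)) f *s e"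
    using exists_stabilizer_f_to_line_e pairing by blast
  then have "(h1 ** h0 ** g) *v e = Q (h0 *v (g *v e)) f *s e"
    by (simp add: matrix_vector_mul_assoc matrix_mul_assoc)
  then show ?thesis
    using h0 h1 by blast
qed

text \<open>The three transvections send \<open>e\<close> to \<open>e + u + z f\<close>, then to \<open>\<alpha> e + z f\<close>,
  then to \<open>\<alpha> e\<close>.\<close>

lemma scaling_by_three_transvections:
  assumes u: "Q u e = 0" "Q u f = 0" and "z \<noteq> 0" "\<alpha> \<noteq> 0"
    and z: "z + cnj z + Q u u = 0"
    and z': "z' + cnj z' + Q u u / (z * cnj z) = 0"
    and \<alpha>: "\<alpha> = 1 + Q u u / cnj z + z * z'"
    and imag: "z / \<alpha> + cnj (z / \<alpha>) = 0"
  shows "\<exists>t1\<in>stabilizer_SU Q f. \<exists>t2\<in>stabilizer_SU Q e. \<exists>t3\<in>stabilizer_SU Q f.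
           (t3 ** t2 ** t1) *v e = \<alpha> *s e"
proof -
  define t1 where "t1 = transvection f u z"
  define t2 where "t2 = transvection e ((- 1 / z) *s u) z'"
  define t3 where "t3 = transvection f 0 (- z / \<alpha>)"
  have u': "Q e u = 0" "Q f u = 0"
    using Q_eq_0_swap[OF u(1)] Q_eq_0_swap[OF u(2)] by simp_all
  have s1: "t1 \<in> stabilizer_SU Q f"
    unfolding t1_def by (rule transvection_stabilizer[OF Q_f_f u(2) z])
  have s2: "t2 \<in> stabilizer_SU Q e"
    unfolding t2_def by (rule transvection_stabilizer) (use u z' in \<open>simp_all add: mult.commute\<close>)
  have s3: "t3 \<in> stabilizer_SU Q f"
    unfolding t3_def by (rule transvection_stabilizer_imag) (use imag in \<open>simp_all add: add_eq_0_iff2\<close>)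
  have a1: "t1 *v e = e + u + z *s f"
    by (simp add: t1_def u')
  have a2: "t2 *v (e + u + z *s f) = \<alpha> *s e + z *s f"
    using \<open>z \<noteq> 0\<close> by (simp add: t2_def \<alpha> u u' algebra_simps vector_sadd_rdistrib vector_smult_assoc)
  have a3: "t3 *v (\<alpha> *s e + z *s f) = \<alpha> *s e"
    using \<open>\<alpha> \<noteq> 0\<close> by (simp add: t3_def algebra_simps vector_sadd_rdistrib[symmetric])
  have "(t3 ** t2 ** t1) *v e = \<alpha> *s e"
    by (simp only: matrix_vector_mul_assoc[symmetric] a1 a2 a3)
  then show ?thesis
    using s1 s2 s3 by blast
qed

lemma exists_anisotropic_perp:
  assumes "u \<noteq> 0" "Q u e = 0" "Q u f = 0"
  shows "\<exists>x. Q x e = 0 \<and> Q x f = 0 \<and> Q x x \<noteq> 0"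
proof -
  obtain y where y: "Q u y \<noteq> 0"
    using nondegenerate assms(1) unfolding nondegenerate_form_def by blast
  define c where "c = Q u (perp y)"
  have c: "c \<noteq> 0"
    using assms(2,3) y by (simp add: c_def perp_def)
  show ?thesis
  proof (cases "Q u u = 0 \<and> Q (perp y) (perp y) = 0")
    case True
    have "Q (perp y) u = cnj c"
      unfolding c_def by (rule Q_cnj_swap)
    then have "Q (u + c *s perp y) (u + c *s perp y) = 2 * (c * cnj c)"
      using True by (simp add: c_def algebra_simps)
    then show ?thesis
      using assms(2,3) c by (intro exI[of _ "u + c *s perp y"]) simp
  next
    case False
    then show ?thesis
      using assms(2,3) Q_perp_e Q_perp_f by blast
  qed
qed

lemma scaling_by_stabilizers:
  assumes "\<alpha> \<noteq> 0" and real_or_perp: "cnj \<alpha> = \<alpha> \<or> (\<exists>u. u \<noteq> 0 \<and> Q u e = 0 \<and> Q u f = 0)"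
  shows "\<exists>t1\<in>stabilizer_SU Q f. \<exists>t2\<in>stabilizer_SU Q e. \<exists>t3\<in>stabilizer_SU Q f.
           (t3 ** t2 ** t1) *v e = \<alpha> *s e"
proof (cases "cnj \<alpha> = \<alpha>")
  case True
  show ?thesis
    by (rule scaling_by_three_transvections[where u = 0 and z = "\<i> * \<alpha>" and z' = "(\<alpha> - 1) / (\<i> * \<alpha>)"])
      (use True \<open>\<alpha> \<noteq> 0\<close> in \<open>simp_all add: field_simps\<close>)
next
  case False
  then obtain u where u: "Q u e = 0" "Q u f = 0" "Q u u \<noteq> 0"
    using real_or_perp exists_anisotropic_perp by blast
  \<comment> \<open>\<open>z\<close> is chosen with \<open>z / \<alpha>\<close> imaginary and \<open>2 Re z = - Q u u\<close>; then \<open>z'\<close> is forced.\<close>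
  define d where "d = \<alpha> - cnj \<alpha>"
  define z where "z = - Q u u * \<alpha> / d"
  have d: "d \<noteq> 0" "cnj d = - d"
    using False by (auto simp: d_def)
  have "cnj (Q u u) = Q u u"
    by (rule cnj_Q_self)
  then show ?thesis
    using u d \<open>\<alpha> \<noteq> 0\<close>
    by (intro scaling_by_three_transvections[where z = z and z' = "(\<alpha> - 1 - Q u u / cnj z) / z"])
      (simp_all add: z_def field_simps, simp_all add: d_def algebra_simps)
qed

theorem SU_form_subset_subgroup:
  assumes H: "H \<subseteq> SU_form Q" "matrix_subgroup H" "stabilizer_SU Q e \<subseteq> H" "stabilizer_SU Q f \<subseteq> H"
    and real_or_perp: "(\<exists>u. u \<noteq> 0 \<and> Q u e = 0 \<and> Q u f = 0)
      \<or> (\<forall>k \<alpha>. k \<in> SU_form Q \<longrightarrow> k *v e = \<alpha> *s e \<longrightarrow> cnj \<alpha> = \<alpha>)"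
  shows "SU_form Q \<subseteq> H"
proof
  have mult: "A \<in> H \<Longrightarrow> B \<in> H \<Longrightarrow> A ** B \<in> H" for A B
    using H(2) by (simp add: matrix_subgroup_def)
  fix g assume g: "g \<in> SU_form Q"
  then obtain h0 h1 \<alpha> where h: "h0 \<in> stabilizer_SU Q e" "h1 \<in> stabilizer_SU Q f"
      and k: "(h1 ** h0 ** g) *v e = \<alpha> *s e"
    using exists_stabilizers_move_e_into_line by blast
  have h10: "h1 ** h0 \<in> H"
    using h H(3,4) mult by blast
  have kSU: "h1 ** h0 ** g \<in> SU_form Q"
    using h10 H(1) g by (blast intro: SU_form_mult)
  then have "\<alpha> \<noteq> 0"
    using k e_nonzero by (rule SU_form_eigenvalue_nonzero)
  moreover have "cnj \<alpha> = \<alpha> \<or> (\<exists>u. u \<noteq> 0 \<and> Q u e = 0 \<and> Q u f = 0)"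
    using real_or_perp kSU k by blast
  ultimately obtain t1 t2 t3 where t: "t1 \<in> stabilizer_SU Q f" "t2 \<in> stabilizer_SU Q e"
      "t3 \<in> stabilizer_SU Q f" and te: "(t3 ** t2 ** t1) *v e = \<alpha> *s e"
    using scaling_by_stabilizers by blast
  have "t3 ** t2 ** t1 \<in> H"
    using t H(3,4) mult by blast
  then have "h1 ** h0 ** g \<in> H"
    using kSU by (rule mem_subgroup_if_same_image[OF H(1-3)]) (simp only: k te)
  with H(2) h10 show "g \<in> H"
    by (rule matrix_subgroup_cancel_left)
qed

lemma span_if_perp_trivial:
  assumes "\<And>u. Q u e = 0 \<Longrightarrow> Q u f = 0 \<Longrightarrow> u = 0"
  shows "x = Q x f *s e + Q x e *s f"
  using assms[OF Q_perp_e[of x] Q_perp_f[of x]] by (simp add: perp_def algebra_simps)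

text \<open>The extra transvection clears the \<open>e\<close>-component of \<open>k f\<close>.\<close>

lemma diagonalize_if_perp_trivial:
  assumes perp0: "\<And>u. Q u e = 0 \<Longrightarrow> Q u f = 0 \<Longrightarrow> u = 0"
    and k: "k \<in> SU_form Q" and ke: "k *v e = \<alpha> *s e"
  shows "\<exists>k'\<in>SU_form Q. k' *v e = \<alpha> *s e \<and> k' *v f = (1 / cnj \<alpha>) *s f"
proof -
  have \<alpha>: "\<alpha> \<noteq> 0"
    using SU_form_eigenvalue_nonzero k ke e_nonzero by blast
  have "cnj \<alpha> * Q (k *v f) e = 1"
    using SU_formD[OF k, of f e] ke by simp
  then have kf_e: "Q (k *v f) e = 1 / cnj \<alpha>"
    using \<alpha> by (simp add: field_simps)
  define \<gamma> where "\<gamma> = Q (k *v f) f"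
  have kf: "k *v f = \<gamma> *s e + (1 / cnj \<alpha>) *s f"
    using span_if_perp_trivial[OF perp0, of "k *v f"] by (simp add: kf_e \<gamma>_def)
  have "Q (k *v f) (k *v f) = 0"
    using SU_formD[OF k, of f f] by simp
  then have "\<gamma> / \<alpha> + cnj \<gamma> / cnj \<alpha> = 0"
    unfolding kf using \<alpha> by (simp add: algebra_simps)
  then have "- \<gamma> * cnj \<alpha> + cnj (- \<gamma> * cnj \<alpha>) = 0"
    using \<alpha> by (simp add: field_simps) (simp add: add_eq_0_iff2)
  then have t: "transvection e 0 (- \<gamma> * cnj \<alpha>) \<in> SU_form Q"
    using transvection_stabilizer_imag[OF Q_e_e] stabilizer_SU_subset by blast
  show ?thesis
  proof (intro bexI conjI)
    show "transvection e 0 (- \<gamma> * cnj \<alpha>) ** k \<in> SU_form Q"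
      using t k by (rule SU_form_mult)
    show "(transvection e 0 (- \<gamma> * cnj \<alpha>) ** k) *v e = \<alpha> *s e"
      by (simp add: matrix_vector_mul_assoc[symmetric] ke)
    show "(transvection e 0 (- \<gamma> * cnj \<alpha>) ** k) *v f = (1 / cnj \<alpha>) *s f"
      using \<alpha> by (simp add: matrix_vector_mul_assoc[symmetric] kf algebra_simps
          vector_sadd_rdistrib[symmetric])
  qed
qed

lemma UNIV_eq_if_perp_trivial:
  fixes w :: "'n \<Rightarrow> complex^'n"
  assumes perp0: "\<And>u. Q u e = 0 \<Longrightarrow> Q u f = 0 \<Longrightarrow> u = 0"
    and B: "invertible (\<chi> i j. w j $ i)" and "w i0 = e" and "f = c *s w j0"
  shows "UNIV = {i0, j0}"
proof (rule ccontr)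
  assume "UNIV \<noteq> {i0, j0}"
  then obtain j where j: "j \<noteq> i0" "j \<noteq> j0"
    by blast
  define a where "a = Q (w j) f"
  define b where "b = Q (w j) e * c"
  define x where "x = axis j 1 - a *s axis i0 1 - b *s axis j0 (1::complex)"
  have "w j = a *s w i0 + b *s w j0"
    using span_if_perp_trivial[OF perp0, of "w j"] assms(3,4) by (simp add: a_def b_def vector_smult_assoc)
  then have "(\<chi> i j. w j $ i) *v x = 0"
    unfolding x_def by (simp add: matrix_vector_mult_diff_distrib vec.scale matrix_vector_mult_columns_axis)
  then have "x = 0"
    using injD[OF inj_matrix_vector_mult[OF B], of x 0] by simp
  then have "x $ j = 0"
    by simp
  then show False
    using j by (simp add: x_def axis_def)
qed

lemma perp_nonzero_or_SU_form_eigenvalue_real: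
  fixes w :: "'n \<Rightarrow> complex^'n"
  assumes B: "invertible (\<chi> i j. w j $ i)" and w: "w i0 = e" "f = c *s w j0" "i0 \<noteq> j0"
  shows "(\<exists>u. u \<noteq> 0 \<and> Q u e = 0 \<and> Q u f = 0)
    \<or> (\<forall>k \<alpha>. k \<in> SU_form Q \<longrightarrow> k *v e = \<alpha> *s e \<longrightarrow> cnj \<alpha> = \<alpha>)"
proof (cases "\<exists>u. u \<noteq> 0 \<and> Q u e = 0 \<and> Q u f = 0")
  case False
  then have perp0: "\<And>u. Q u e = 0 \<Longrightarrow> Q u f = 0 \<Longrightarrow> u = 0"
    by blast
  have UNIV: "UNIV = {i0, j0}"
    using UNIV_eq_if_perp_trivial[OF perp0 B w(1,2)] .
  have c: "c \<noteq> 0"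
    using w(2) Q_e_f by auto
  have "cnj \<alpha> = \<alpha>" if k: "k \<in> SU_form Q" "k *v e = \<alpha> *s e" for k \<alpha>
  proof -
    obtain k' where k': "k' \<in> SU_form Q" "k' *v e = \<alpha> *s e" "k' *v f = (1 / cnj \<alpha>) *s f"
      using diagonalize_if_perp_trivial[OF perp0 k] by blast
    define l where "l j = (if j = i0 then \<alpha> else 1 / cnj \<alpha>)" for j
    have "c *s (k' *v w j0) = c *s ((1 / cnj \<alpha>) *s w j0)"
      using k'(3) unfolding w(2) by (simp add: vec.scale vector_smult_assoc mult.commute)
    then have "k' *v w j0 = (1 / cnj \<alpha>) *s w j0"
      using c vector_mul_lcancel by metis
    then have "k' *v column j (\<chi> i j. w j $ i) = l j *s column j (\<chi> i j. w j $ i)" for j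
      using UNIV k'(2) w by (auto simp: column_def l_def)
    then have "det k' = prod l UNIV"
      by (rule det_eq_prod_eigenvalues[OF B])
    then have "\<alpha> / cnj \<alpha> = 1"
      using k'(1) w(3) by (simp add: UNIV l_def SU_form_def)
    moreover have "\<alpha> \<noteq> 0"
      using SU_form_eigenvalue_nonzero k e_nonzero by blast
    ultimately show ?thesis
      by (simp add: field_simps)
  qed
  then show ?thesis
    by blast
qed blast

end

theorem mainTheorem13:
  fixes Q :: "complex^'n \<Rightarrow> complex^'n \<Rightarrow> complex"
    and w :: "'n \<Rightarrow> complex^'n"
  assumes "hermitian_form Q"
    and "nondegenerate_form Q"
    and "nondefinite_form Q"
    and "invertible (\<chi> i j. w j $ i)"
    and "\<forall>i. Q (w i) (w i) = 0"
    and "\<forall>i j. i \<noteq> j \<longrightarrow> Q (w i) (w j) \<noteq> 0"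
  shows "closed_subgroup_generated Q (\<Union>i. stabilizer_SU Q (w i)) = SU_form Q"
proof -
  interpret herm_form Q
    using assms(1) by unfold_locales
  obtain i0 j0 :: 'n where ij: "i0 \<noteq> j0"
    using nondefinite_two_indices[OF assms(3) assms(5)[rule_format] invertible_columns_nonzero[OF assms(4)]]
    by blast
  define c where "c = 1 / cnj (Q (w i0) (w j0))"
  have c: "c \<noteq> 0"
    using assms(6) ij by (simp add: c_def)
  have "Q (w i0) (c *s w j0) = 1"
    using assms(6) ij by (simp add: c_def)
  then interpret hyperbolic_pair Q "w i0" "c *s w j0"
    using assms(2,5) by unfold_locales simp_all
  show ?thesis
  proof (rule closed_subgroup_generated_eq_SU_form)
    show "(\<Union>i. stabilizer_SU Q (w i)) \<subseteq> SU_form Q"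
      using stabilizer_SU_subset by blast
    fix H assume H: "H \<subseteq> SU_form Q" "matrix_subgroup H" "(\<Union>i. stabilizer_SU Q (w i)) \<subseteq> H"
    then have "stabilizer_SU Q (w i0) \<subseteq> H" "stabilizer_SU Q (c *s w j0) \<subseteq> H"
      by (auto simp: stabilizer_SU_scale[OF c])
    then show "SU_form Q \<subseteq> H"
      using perp_nonzero_or_SU_form_eigenvalue_real[OF assms(4) refl refl ij]
      by (rule SU_form_subset_subgroup[OF H(1,2)])
  qed
qed

end
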